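(* Let $D=(D_1,D_2)\in\mathcal{U}(n,s_1\cdots s_p s_{p+1}\cdots s_{p+q})$ be a U-type design whose first $p$ factors are qualitative and last $q$ factors are quantitative, with rows $x_i=(x_{i1},\dots,x_{i,p+q})$, $i=1,\dots,n$, where the quantitative entries are the transformed values in $[0,1]$. Then the squared qualitative-quantitative discrepancy of $D$ equals $$\mathrm{QQD}^2(D)=C+\frac{1}{n^2}\sum_{i,j=1}^{n}\left(\frac{5}{4}\right)^p\left(\frac{6}{5}\right)^{\delta_{ij}(D_1)}\prod_{k=p+1}^{p+q}\left(\frac{3}{2}-|x_{ik}-x_{jk}|+|x_{ik}-x_{jk}|^2\right),$$ where $C=-\prod_{k=1}^{p}\left(\frac{5s_k+1}{4s_k}\right)\left(\frac{4}{3}\right)^q$ and $\delta_{ij}(D_1)$ is the number of coordinates $k\in\{1,\dots,p\}$ with $x_{ik}=x_{jk}$ (the coincidence number of rows $i$ and $j$ of $D_1$).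
   Context: A U-type design in $\mathcal{U}(n,s_1\cdots s_{p+q})$ is an $n\times(p+q)$ matrix whose $k$th column takes each value in $\{0,1,\dots,s_k-1\}$ equally often. The first $p$ columns ($D_1$) are qualitative factors, the last $q$ columns ($D_2$) quantitative. For the quantitative columns ($k=p+1,\dots,p+q$) a level $x\in\{0,\dots,s_k-1\}$ is transformed to $(2x+1)/(2s_k)\in[0,1]$, and $x_{ik}$ denotes this transformed value. Let $\chi=\chi_1\times\cdots\times\chi_{p+q}$ with $\chi_k=\{0,\dots,s_k-1\}$ for $k\le p$ and $\chi_k=[0,1]$ for $k>p$, and let $F$ be the uniform distribution on $\chi$ (product of discrete uniform distributions on the $\chi_k$, $k\le p$, and Lebesgue measure on $[0,1]$ for $k>p$). Define the kernel $\mathcal{K}(t,z)=\prod_{k=1}^{p+q}\mathcal{K}_k(t_k,z_k)$, where $\mathcal{K}_k(t_k,z_k)=(3/2)^{\delta_{t_kz_k}}(5/4)^{1-\delta_{t_kz_k}}$ for $k\le p$ ($\delta_{tz}=1$ if $t=z$ and $0$ otherwise) and $\mathcal{K}_k(t_k,z_k)=\frac32-|t_k-z_k|+|t_k-z_k|^2$ for $k>p$. The squared qualitative-quantitative discrepancy (QQD) of $D$ with rows $x_1,\dots,x_n$ is $$\mathrm{QQD}^2(D)=\int_{\chi^2}\mathcal{K}(t,z)\,dF(t)\,dF(z)-\frac{2}{n}\sum_{i=1}^n\int_\chi\mathcal{K}(t,x_i)\,dF(t)+\frac{1}{n^2}\sum_{i,j=1}^n\mathcal{K}(x_i,x_j).$$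 *)

theory Defs
  imports "HOL-Probability.Probability"
begin

text \<open>A design with n rows and m columns is a function x with x i k the level
  (in {0..<s k}) of row i (i < n) in column k (k < m).\<close>
definition is_Utype :: "nat \<Rightarrow> nat \<Rightarrow> (nat \<Rightarrow> nat) \<Rightarrow> (nat \<Rightarrow> nat \<Rightarrow> nat) \<Rightarrow> bool" where
  "is_Utype n m s x \<longleftrightarrow>
     (\<forall>k<m. 0 < s k \<and> (\<forall>i<n. x i k < s k) \<and>
            (\<forall>v<s k. card {i. i < n \<and> x i k = v} * s k = n))"

definition design_point :: "nat \<Rightarrow> (nat \<Rightarrow> nat) \<Rightarrow> (nat \<Rightarrow> nat \<Rightarrow> nat) \<Rightarrow> nat \<Rightarrow> (nat \<Rightarrow> real)" where
  "design_point p s x i = (\<lambda>k. if k < p then real (x i k)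
                               else (2 * real (x i k) + 1) / (2 * real (s k)))"

definition qqd_kernel :: "nat \<Rightarrow> nat \<Rightarrow> (nat \<Rightarrow> real) \<Rightarrow> (nat \<Rightarrow> real) \<Rightarrow> real" where
  "qqd_kernel p q t z =
     (\<Prod>k<p+q. if k < p then (if t k = z k then 3/2 else 5/4)
               else 3/2 - \<bar>t k - z k\<bar> + \<bar>t k - z k\<bar>^2)"

definition qqd_measure :: "nat \<Rightarrow> nat \<Rightarrow> (nat \<Rightarrow> nat) \<Rightarrow> (nat \<Rightarrow> real) measure" where
  "qqd_measure p q s =
     PiM {..<p+q} (\<lambda>k. if k < p then uniform_count_measure (real ` {0..<s k})
                       else uniform_measure lborel {0..1::real})"

definition QQD2 :: "nat \<Rightarrow> nat \<Rightarrow> nat \<Rightarrow> (nat \<Rightarrow> nat) \<Rightarrow> (nat \<Rightarrow> nat \<Rightarrow> nat) \<Rightarrow> real" where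
  "QQD2 n p q s x =
     (let F = qqd_measure p q s; K = qqd_kernel p q; X = design_point p s x in
       (\<integral>z. (\<integral>t. K t z \<partial>F) \<partial>F)
       - 2 / real n * (\<Sum>i<n. \<integral>t. K t (X i) \<partial>F)
       + 1 / (real n)^2 * (\<Sum>i<n. \<Sum>j<n. K (X i) (X j)))"

end

theory Submission
  imports Defs
begin

(* The kernel K and the distribution F both factor over the coordinates, so the inner
   integral int K(t,z) dF(t) is the product of the one-dimensional means
   H_k(z_k) = int K_k(t,z_k) dF_k(t). On the support of F_k each H_k is constant:
   a qualitative level matches itself once and the other s_k - 1 levels not at all, giving
   (3/2 + (s_k - 1) 5/4) / s_k = (5 s_k + 1) / (4 s_k), and for c in [0,1] one computes
   int_0^1 (3/2 - |t - c| + |t - c|^2) dt = 4/3 independently of c. Hence the double integral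
   and every single integral at a design point equal the same product -C, so the first two
   terms of QQD^2 add up to C. In K(x_i, x_j) each qualitative factor is 5/4, times 6/5 on a
   coincidence. *)

lemma has_real_derivative_mult_abs:
  "((\<lambda>u::real. u * \<bar>u\<bar>) has_real_derivative 2 * \<bar>x\<bar>) (at x)"
proof (cases x "0::real" rule: linorder_cases)
  case less
  have "((\<lambda>u::real. - (u * u)) has_real_derivative 2 * \<bar>x\<bar>) (at x)"
    using less by (auto intro!: derivative_eq_intros)
  then show ?thesis
    by (rule has_field_derivative_transform_within_open[where S = "{..<0}"]) (use less in auto)
next
  case equal
  have "((\<lambda>u::real. \<bar>u\<bar>) \<longlongrightarrow> 0) (at 0)"
    using tendsto_rabs[OF tendsto_ident_at[of "0::real" UNIV]] by simp
  then have "((\<lambda>u::real. (u * \<bar>u\<bar> - 0 * \<bar>0\<bar>) / (u - 0)) \<longlongrightarrow> 0) (at 0)"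
    by (rule Lim_transform_eventually) (simp add: eventually_at_filter)
  then show ?thesis
    using equal by (simp add: has_field_derivative_iff)
next
  case greater
  have "((\<lambda>u::real. u * u) has_real_derivative 2 * \<bar>x\<bar>) (at x)"
    using greater by (auto intro!: derivative_eq_intros)
  then show ?thesis
    by (rule has_field_derivative_transform_within_open[where S = "{0<..}"]) (use greater in auto)
qed

text \<open>A closed form valid for every real \<open>c\<close>, not only on \<open>[0,1]\<close>: the outer integral
  of \<open>QQD\<^sup>2\<close> needs the inner one as a measurable function on all of \<open>\<real>\<close>.\<close>

definition quant_kernel_mean :: "real \<Rightarrow> real" where
  "quant_kernel_mean c = 3/2 - ((1 - c) * \<bar>1 - c\<bar> + c * \<bar>c\<bar>) / 2 + ((1 - c)^3 + c^3) / 3"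

lemma integral_lborel_quant_kernel:
  "(\<integral>t. indicator {0..1} t * (3/2 - \<bar>t - c\<bar> + \<bar>t - c\<bar>^2) \<partial>lborel) = quant_kernel_mean c"
proof -
  define F where "F t = 3/2 * t - (t - c) * \<bar>t - c\<bar> / 2 + (t - c)^3 / 3" for t :: real
  have "(F has_real_derivative 3/2 - \<bar>t - c\<bar> + \<bar>t - c\<bar>^2) (at t)" for t
  proof -
    have "((\<lambda>t. (t - c) * \<bar>t - c\<bar>) has_real_derivative 2 * \<bar>t - c\<bar> * 1) (at t)"
      by (rule DERIV_chain2[OF has_real_derivative_mult_abs]) (auto intro!: derivative_eq_intros)
    then have "(F has_real_derivative 3/2 - 2 * \<bar>t - c\<bar> * 1 / 2 + 3 * (t - c)^2 / 3) (at t)"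
      unfolding F_def by (intro DERIV_add DERIV_diff DERIV_cdivide) (auto intro!: derivative_eq_intros)
    then show ?thesis
      by simp
  qed
  then have "(\<integral>t. indicator {0..1} t *\<^sub>R (3/2 - \<bar>t - c\<bar> + \<bar>t - c\<bar>^2) \<partial>lborel) = F 1 - F 0"
    by (intro integral_FTC_atLeastAtMost continuous_intros)
       (auto simp: has_real_derivative_iff_has_vector_derivative intro: has_vector_derivative_at_within)
  then show ?thesis
    by (simp add: F_def quant_kernel_mean_def field_simps)
qed

lemma quant_kernel_mean_unit_interval: "c \<in> {0..1} \<Longrightarrow> quant_kernel_mean c = 4/3"
  by (auto simp: quant_kernel_mean_def power3_eq_cube field_simps)

lemma continuous_on_quant_kernel_mean: "continuous_on UNIV quant_kernel_mean"
  unfolding quant_kernel_mean_def by (intro continuous_intros) auto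

lemma uniform_measure_unit_interval_eq_density:
  "uniform_measure lborel {0..1::real} = density lborel (\<lambda>t. ennreal (indicator {0..1} t))"
  unfolding uniform_measure_def by (intro density_cong) (auto split: split_indicator)

lemma integral_uniform_measure_unit_interval:
  fixes f :: "real \<Rightarrow> real"
  assumes "f \<in> borel_measurable borel"
  shows "(\<integral>t. f t \<partial>uniform_measure lborel {0..1}) = (\<integral>t. indicator {0..1} t * f t \<partial>lborel)"
  using assms by (simp add: uniform_measure_unit_interval_eq_density integral_density)

lemma integrable_uniform_measure_unit_interval:
  fixes f :: "real \<Rightarrow> real"
  assumes "continuous_on UNIV f"
  shows "integrable (uniform_measure lborel {0..1}) f"
proof -
  have "integrable lborel (\<lambda>t. f t * indicator {0..1} t)"
    using assms by (intro borel_integrable_atLeastAtMost) (simp add: continuous_on_eq_continuous_at)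
  then show ?thesis
    using borel_measurable_continuous_onI[OF assms] unfolding uniform_measure_unit_interval_eq_density
    by (subst integrable_density) (auto simp: mult.commute)
qed

lemma integral_uniform_count_measure_if_eq:
  fixes a b :: real
  assumes "finite A" and "c \<in> A"
  shows "(\<integral>t. (if t = c then a else b) \<partial>uniform_count_measure A) = (a + (real (card A) - 1) * b) / card A"
proof -
  have "(\<Sum>t\<in>A. if t = c then a else b) = (\<Sum>t\<in>A. b + (if t = c then a - b else 0))"
    by (intro sum.cong) auto
  also have "\<dots> = a + (real (card A) - 1) * b"
    using assms by (simp add: sum.distrib algebra_simps)
  finally show ?thesis
    using assms by (simp add: integral_uniform_count_measure)
qed

lemma measurable_uniform_count_measure: "f \<in> uniform_count_measure A \<rightarrow>\<^sub>M N \<longleftrightarrow> f \<in> A \<rightarrow> space N"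
  by (simp add: measurable_cong_sets[OF sets_uniform_count_measure_count_space refl])

definition qqd_marginal :: "nat \<Rightarrow> (nat \<Rightarrow> nat) \<Rightarrow> nat \<Rightarrow> real measure" where
  "qqd_marginal p s k =
     (if k < p then uniform_count_measure (real ` {0..<s k}) else uniform_measure lborel {0..1})"

definition qqd_support :: "nat \<Rightarrow> (nat \<Rightarrow> nat) \<Rightarrow> nat \<Rightarrow> real set" where
  "qqd_support p s k = (if k < p then real ` {0..<s k} else {0..1})"

definition qqd_kernel_factor :: "nat \<Rightarrow> nat \<Rightarrow> real \<Rightarrow> real \<Rightarrow> real" where
  "qqd_kernel_factor p k a b =
     (if k < p then (if a = b then 3/2 else 5/4) else 3/2 - \<bar>a - b\<bar> + \<bar>a - b\<bar>^2)"

definition qqd_factor_mean :: "nat \<Rightarrow> (nat \<Rightarrow> nat) \<Rightarrow> nat \<Rightarrow> real \<Rightarrow> real" where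
  "qqd_factor_mean p s k c = (\<integral>a. qqd_kernel_factor p k a c \<partial>qqd_marginal p s k)"

definition qqd_factor_mean_value :: "nat \<Rightarrow> (nat \<Rightarrow> nat) \<Rightarrow> nat \<Rightarrow> real" where
  "qqd_factor_mean_value p s k = (if k < p then (5 * real (s k) + 1) / (4 * real (s k)) else 4/3)"

lemma qqd_measure_eq_PiM: "qqd_measure p q s = PiM {..<p+q} (qqd_marginal p s)"
  unfolding qqd_measure_def qqd_marginal_def by simp

lemma qqd_kernel_eq_prod: "qqd_kernel p q t z = (\<Prod>k<p+q. qqd_kernel_factor p k (t k) (z k))"
  unfolding qqd_kernel_def qqd_kernel_factor_def by simp

lemma prob_space_qqd_marginal: "(k < p \<Longrightarrow> 0 < s k) \<Longrightarrow> prob_space (qqd_marginal p s k)"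
  unfolding qqd_marginal_def
  by (auto intro!: prob_space_uniform_count_measure prob_space_uniform_measure)

lemma AE_qqd_support: "AE a in qqd_marginal p s k. a \<in> qqd_support p s k"
proof (cases "k < p")
  case True
  then show ?thesis
    unfolding qqd_marginal_def qqd_support_def by (auto intro: AE_I2 simp: space_uniform_count_measure)
next
  case False
  then show ?thesis
    unfolding qqd_marginal_def qqd_support_def by (simp add: AE_uniform_measureI)
qed

lemma
  fixes f :: "real \<Rightarrow> real"
  assumes "k < p \<Longrightarrow> 0 < s k"
    and "f \<in> borel_measurable (qqd_marginal p s k)"
    and "\<And>c. c \<in> qqd_support p s k \<Longrightarrow> f c = v"
  shows integrable_qqd_marginal_const_on_support: "integrable (qqd_marginal p s k) f"
    and integral_qqd_marginal_const_on_support: "(\<integral>c. f c \<partial>qqd_marginal p s k) = v"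
proof -
  interpret prob_space "qqd_marginal p s k"
    using assms(1) by (rule prob_space_qqd_marginal)
  have AE_eq: "AE c in qqd_marginal p s k. v = f c"
    using AE_qqd_support by eventually_elim (simp add: assms(3))
  show "integrable (qqd_marginal p s k) f"
    by (rule integrable_cong_AE_imp[OF integrable_const assms(2) AE_eq])
  have "(\<integral>c. v \<partial>qqd_marginal p s k) = (\<integral>c. f c \<partial>qqd_marginal p s k)"
    by (rule integral_cong_AE[OF _ assms(2) AE_eq]) simp
  then show "(\<integral>c. f c \<partial>qqd_marginal p s k) = v"
    by (simp add: prob_space)
qed

lemma integrable_qqd_kernel_factor:
  "integrable (qqd_marginal p s k) (\<lambda>a. qqd_kernel_factor p k a c)"
proof (cases "k < p")
  case True
  then show ?thesis
    by (simp add: qqd_marginal_def uniform_count_measure_def integrable_point_measure_finite)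
next
  case False
  have "continuous_on UNIV (\<lambda>a::real. 3/2 - \<bar>a - c\<bar> + \<bar>a - c\<bar>^2)"
    by (intro continuous_intros)
  with False show ?thesis
    by (simp add: qqd_marginal_def qqd_kernel_factor_def integrable_uniform_measure_unit_interval)
qed

lemma qqd_factor_mean_quantitative: "\<not> k < p \<Longrightarrow> qqd_factor_mean p s k = quant_kernel_mean"
proof
  fix c
  assume "\<not> k < p"
  have "(\<lambda>a::real. 3/2 - \<bar>a - c\<bar> + \<bar>a - c\<bar>^2) \<in> borel_measurable borel"
    by (intro borel_measurable_continuous_onI continuous_intros)
  with \<open>\<not> k < p\<close> show "qqd_factor_mean p s k c = quant_kernel_mean c"
    by (simp add: qqd_factor_mean_def qqd_marginal_def qqd_kernel_factor_def
        integral_uniform_measure_unit_interval integral_lborel_quant_kernel[simplified])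
qed

lemma qqd_factor_mean_on_support:
  assumes "c \<in> qqd_support p s k"
  shows "qqd_factor_mean p s k c = qqd_factor_mean_value p s k"
proof (cases "k < p")
  case True
  have card: "card (real ` {0..<s k}) = s k"
    by (simp add: card_image)
  with True assms have "qqd_factor_mean p s k c = (3/2 + (real (s k) - 1) * 5/4) / s k"
    by (simp add: qqd_factor_mean_def qqd_marginal_def qqd_kernel_factor_def qqd_support_def
        integral_uniform_count_measure_if_eq)
  with True show ?thesis
    by (simp add: qqd_factor_mean_value_def field_simps)
next
  case False
  with assms show ?thesis
    by (simp add: qqd_factor_mean_quantitative qqd_factor_mean_value_def qqd_support_def
        quant_kernel_mean_unit_interval)
qed

lemma borel_measurable_qqd_factor_mean:
  "qqd_factor_mean p s k \<in> borel_measurable (qqd_marginal p s k)"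
proof (cases "k < p")
  case True
  then show ?thesis
    by (simp add: qqd_marginal_def measurable_uniform_count_measure)
next
  case False
  then show ?thesis
    using borel_measurable_continuous_onI[OF continuous_on_quant_kernel_mean]
    by (simp add: qqd_marginal_def qqd_factor_mean_quantitative)
qed

lemma product_sigma_finite_qqd_marginal:
  "(\<And>k. k < p \<Longrightarrow> 0 < s k) \<Longrightarrow> product_sigma_finite (qqd_marginal p s)"
  unfolding product_sigma_finite_def
  by (blast intro: prob_space_imp_sigma_finite prob_space_qqd_marginal)

lemma integral_qqd_kernel:
  assumes "\<And>k. k < p \<Longrightarrow> 0 < s k"
  shows "(\<integral>t. qqd_kernel p q t z \<partial>qqd_measure p q s) = (\<Prod>k<p+q. qqd_factor_mean p s k (z k))"
proof -
  interpret product_sigma_finite "qqd_marginal p s"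
    using assms by (rule product_sigma_finite_qqd_marginal)
  show ?thesis
    unfolding qqd_measure_eq_PiM qqd_kernel_eq_prod qqd_factor_mean_def
    by (rule product_integral_prod[where f = "\<lambda>k a. qqd_kernel_factor p k a (z k)", simplified])
       (auto intro: integrable_qqd_kernel_factor)
qed

lemma integral_qqd_kernel_on_support:
  assumes "\<And>k. k < p \<Longrightarrow> 0 < s k" and "\<And>k. k < p + q \<Longrightarrow> z k \<in> qqd_support p s k"
  shows "(\<integral>t. qqd_kernel p q t z \<partial>qqd_measure p q s) = (\<Prod>k<p+q. qqd_factor_mean_value p s k)"
  using assms by (simp add: integral_qqd_kernel qqd_factor_mean_on_support)

lemma double_integral_qqd_kernel:
  assumes "\<And>k. k < p \<Longrightarrow> 0 < s k"
  shows "(\<integral>z. (\<integral>t. qqd_kernel p q t z \<partial>qqd_measure p q s) \<partial>qqd_measure p q s)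
           = (\<Prod>k<p+q. qqd_factor_mean_value p s k)"
proof -
  interpret product_sigma_finite "qqd_marginal p s"
    using assms by (rule product_sigma_finite_qqd_marginal)
  have "(\<integral>z. (\<integral>t. qqd_kernel p q t z \<partial>qqd_measure p q s) \<partial>qqd_measure p q s)
      = (\<integral>z. (\<Prod>k<p+q. qqd_factor_mean p s k (z k)) \<partial>PiM {..<p+q} (qqd_marginal p s))"
    using integral_qqd_kernel[OF assms] by (simp add: qqd_measure_eq_PiM)
  also have "\<dots> = (\<Prod>k<p+q. \<integral>c. qqd_factor_mean p s k c \<partial>qqd_marginal p s k)"
    using assms by (intro product_integral_prod integrable_qqd_marginal_const_on_support[OF _
        borel_measurable_qqd_factor_mean qqd_factor_mean_on_support]) auto
  also have "\<dots> = (\<Prod>k<p+q. qqd_factor_mean_value p s k)"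
    using assms by (intro prod.cong refl integral_qqd_marginal_const_on_support[OF _
        borel_measurable_qqd_factor_mean qqd_factor_mean_on_support]) auto
  finally show ?thesis .
qed

lemma prod_lessThan_add:
  fixes f :: "nat \<Rightarrow> 'a::comm_monoid_mult"
  shows "(\<Prod>k<m+n. f k) = (\<Prod>k<m. f k) * (\<Prod>k\<in>{m..<m+n}. f k)"
  by (simp add: lessThan_atLeast0 prod.atLeastLessThan_concat)

lemma prod_qqd_factor_mean_value:
  "(\<Prod>k<p+q. qqd_factor_mean_value p s k) = (\<Prod>k<p. (5 * real (s k) + 1) / (4 * real (s k))) * (4/3)^q"
  by (simp add: prod_lessThan_add qqd_factor_mean_value_def)

lemma design_point_in_qqd_support:
  assumes "x i k < s k"
  shows "design_point p s x i k \<in> qqd_support p s k"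
proof -
  have "2 * real (x i k) + 1 \<le> 2 * real (s k)"
    using assms by linarith
  then show ?thesis
    using assms by (auto simp: design_point_def qqd_support_def field_simps)
qed

lemma qqd_kernel_design_point:
  "qqd_kernel p q (design_point p s x i) (design_point p s x j) =
     (5/4)^p * (6/5)^(card {k. k < p \<and> x i k = x j k}) *
       (\<Prod>k\<in>{p..<p+q}. 3/2 - \<bar>design_point p s x i k - design_point p s x j k\<bar>
                              + \<bar>design_point p s x i k - design_point p s x j k\<bar>^2)"
proof -
  let ?X = "design_point p s x"
  have "(\<Prod>k<p. qqd_kernel_factor p k (?X i k) (?X j k))
      = (\<Prod>k<p. 5/4 * (if x i k = x j k then 6/5 else 1))"
    by (intro prod.cong) (auto simp: qqd_kernel_factor_def design_point_def)
  also have "\<dots> = (5/4)^p * (\<Prod>k<p. if x i k = x j k then 6/5 else 1)"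
    by (simp only: prod.distrib prod_constant card_lessThan)
  also have "(\<Prod>k<p. if x i k = x j k then 6/5 else 1) = (\<Prod>k\<in>{k\<in>{..<p}. x i k = x j k}. 6/5 :: real)"
    by (rule prod.inter_filter[symmetric]) simp
  also have "\<dots> = (6/5)^(card {k. k < p \<and> x i k = x j k})"
    by simp
  finally have qualitative: "(\<Prod>k<p. qqd_kernel_factor p k (?X i k) (?X j k))
      = (5/4)^p * (6/5)^(card {k. k < p \<and> x i k = x j k})" .
  have quantitative: "(\<Prod>k\<in>{p..<p+q}. qqd_kernel_factor p k (?X i k) (?X j k))
      = (\<Prod>k\<in>{p..<p+q}. 3/2 - \<bar>?X i k - ?X j k\<bar> + \<bar>?X i k - ?X j k\<bar>^2)"
    by (intro prod.cong) (auto simp: qqd_kernel_factor_def)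
  show ?thesis
    unfolding qqd_kernel_eq_prod prod_lessThan_add qualitative quantitative ..
qed

theorem theorem1:
  fixes n p q :: nat and s :: "nat \<Rightarrow> nat" and x :: "nat \<Rightarrow> nat \<Rightarrow> nat"
  assumes "0 < n"
    and "is_Utype n (p + q) s x"
  shows "QQD2 n p q s x =
           - (\<Prod>k<p. (5 * real (s k) + 1) / (4 * real (s k))) * (4/3)^q
           + 1 / (real n)^2 *
             (\<Sum>i<n. \<Sum>j<n. (5/4)^p * (6/5)^(card {k. k < p \<and> x i k = x j k}) *
                (\<Prod>k\<in>{p..<p+q}.
                   3/2 - \<bar>design_point p s x i k - design_point p s x j k\<bar>
                       + \<bar>design_point p s x i k - design_point p s x j k\<bar>^2))"
proof -
  let ?C = "(\<Prod>k<p. (5 * real (s k) + 1) / (4 * real (s k))) * (4/3)^q"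
  let ?F = "qqd_measure p q s" and ?K = "qqd_kernel p q" and ?X = "design_point p s x"
  have pos: "\<And>k. k < p \<Longrightarrow> 0 < s k"
    and levels: "\<And>i k. i < n \<Longrightarrow> k < p + q \<Longrightarrow> x i k < s k"
    using assms(2) unfolding is_Utype_def by auto
  have "(\<integral>z. (\<integral>t. ?K t z \<partial>?F) \<partial>?F) = ?C"
    using double_integral_qqd_kernel[OF pos] by (simp add: prod_qqd_factor_mean_value)
  moreover have "(\<integral>t. ?K t (?X i) \<partial>?F) = ?C" if "i < n" for i
    using that by (simp add: integral_qqd_kernel_on_support[OF pos] design_point_in_qqd_support
        levels prod_qqd_factor_mean_value)
  then have "2 / real n * (\<Sum>i<n. \<integral>t. ?K t (?X i) \<partial>?F) = 2 * ?C"
    using assms(1) by simp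
  ultimately show ?thesis
    unfolding QQD2_def Let_def qqd_kernel_design_point by simp
qed

end
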